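(* Let $m\ge1$, $\vec\mu=(\mu_1,\dots,\mu_m)\in\mathbb{R}_{>0}^m$, $\vec\sigma=(\sigma_1,\dots,\sigma_m)\in\mathbb{R}_{\ge0}^m$, $r_j=\sigma_j/\mu_j$ and $r_{\max}=\max_j r_j$. (i) Let $A$ be the mechanism that sells each item $j$ separately, posting for item $j$ an independent random price drawn from the log-lottery $P^{\log}_{\mu_j,\sigma_j}$. Then $\mathrm{OPT}(F)/\mathrm{REV}(A;F)\le\rho(r_{\max})$ for every $F\in\mathbb{F}_{\vec\mu,\vec\sigma}$; in particular $\mathrm{APX}(\vec\mu,\vec\sigma)\le\rho(r_{\max})$. (ii) Let $\bar\mu=\sum_j\mu_j$, $\bar\sigma=\sqrt{\sum_j\sigma_j^2}$, $\bar r=\bar\sigma/\bar\mu$, and let $B$ be the mechanism that offers the bundle of all $m$ items at a single random price drawn from $P^{\log}_{\bar\mu,\bar\sigma}$. Then $\mathrm{OPT}(F)/\mathrm{REV}(B;F)\le\rho(\bar r)$ for every $F\in\mathbb{F}_{\vec\mu,\vec\sigma}$ that is a product distribution (i.e. the item values are independent).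
   Context: One buyer with additive valuation for $m$ items; the value vector $\vec v=(v_1,\dots,v_m)\in\mathbb{R}_{\ge0}^m$ is drawn from a joint distribution $F$. $\mathbb{F}_{\vec\mu,\vec\sigma}$ is the class of all joint distributions on $\mathbb{R}^m_{\ge0}$ whose $j$-th marginal has mean $\mu_j$ and standard deviation at most $\sigma_j$, for each $j$ (no independence assumed). A mechanism is a pair $(x,\pi)$ with $x:\mathbb{R}^m_{\ge0}\to[0,1]^m$ and $\pi:\mathbb{R}^m_{\ge0}\to\mathbb{R}_{\ge0}$; it is truthful if $x(\vec v)\cdot\vec v-\pi(\vec v)\ge x(\vec w)\cdot\vec v-\pi(\vec w)$ and $x(\vec v)\cdot\vec v-\pi(\vec v)\ge0$ for all $\vec v,\vec w$. $\mathrm{REV}(A;F)=\mathbb{E}_{\vec v\sim F}[\pi(\vec v)]$, $\mathrm{OPT}(F)=\sup$ of $\mathrm{REV}$ over truthful mechanisms, and $\mathrm{APX}(\vec\mu,\vec\sigma)=\inf_A\sup_{F\in\mathbb{F}_{\vec\mu,\vec\sigma}}\mathrm{OPT}(F)/\mathrm{REV}(A;F)$ over truthful $A$ (zero denominators give $+\infty$). A posted (random) price mechanism sells an item or bundle to the buyer iff the buyer's value for it is at least the drawn price. For $\mu>0,\sigma\ge0$, the log-lottery $P^{\log}_{\mu,\sigma}$ is the random price on $[\pi_1,\pi_2]$ with cdf $x\mapsto\frac{\pi_2\ln(x/\pi_1)-(x-\pi_1)}{\pi_2\ln(\pi_2/\pi_1)-(\pi_2-\pi_1)}$, where $\pi_1,\pi_2$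 are the unique solutions of $\pi_1(1+\ln(\pi_2/\pi_1))=\mu$, $\pi_1(2\pi_2-\pi_1)=\mu^2+\sigma^2$ (for $\sigma=0$ it is the deterministic price $\mu$). For $r\ge0$, $\rho(r)$ is the unique positive solution $\rho$ of $\frac{1}{\rho^2}(2e^{\rho-1}-1)=r^2+1$. *)

theory Defs
  imports "HOL-Probability.Probability"
begin

text \<open>Items are indexed by a finite type 'm (so m = CARD('m) \<ge> 1); value vectors are real ^ 'm.\<close>

type_synonym 'm mechanism = "(real ^ 'm \<Rightarrow> real ^ 'm) \<times> (real ^ 'm \<Rightarrow> real)"

definition nonneg_vecs :: "(real ^ 'm::finite) set" where
  "nonneg_vecs = {v. \<forall>j. 0 \<le> v $ j}"

definition truthful :: "('m::finite) mechanism \<Rightarrow> bool" where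
  "truthful M \<longleftrightarrow>
     (\<forall>v\<in>nonneg_vecs. (\<forall>j. 0 \<le> fst M v $ j \<and> fst M v $ j \<le> 1) \<and> 0 \<le> snd M v) \<and>
     (\<forall>v\<in>nonneg_vecs. \<forall>w\<in>nonneg_vecs.
        fst M v \<bullet> v - snd M v \<ge> fst M w \<bullet> v - snd M w) \<and>
     (\<forall>v\<in>nonneg_vecs. fst M v \<bullet> v - snd M v \<ge> 0)"

definition admissible_mech :: "('m::finite) mechanism \<Rightarrow> bool" where
  "admissible_mech M \<longleftrightarrow> truthful M \<and> snd M \<in> borel_measurable borel"

definition REV :: "('m::finite) mechanism \<Rightarrow> (real ^ 'm) measure \<Rightarrow> ennreal" where
  "REV M F = (\<integral>\<^sup>+ v. ennreal (snd M v) \<partial>F)"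

definition OPT :: "(real ^ 'm::finite) measure \<Rightarrow> ennreal" where
  "OPT F = (SUP M \<in> {M. admissible_mech M}. REV M F)"

definition dist_class :: "real ^ 'm::finite \<Rightarrow> real ^ 'm \<Rightarrow> (real ^ 'm) measure set" where
  "dist_class \<mu> \<sigma> = {F. prob_space F \<and> sets F = sets borel \<and>
      (AE v in F. v \<in> nonneg_vecs) \<and>
      (\<forall>j. integrable F (\<lambda>v. v $ j) \<and> integrable F (\<lambda>v. (v $ j)\<^sup>2) \<and>
           prob_space.expectation F (\<lambda>v. v $ j) = \<mu> $ j \<and>
           sqrt (prob_space.variance F (\<lambda>v. v $ j)) \<le> \<sigma> $ j)}"

definition ratio :: "ennreal \<Rightarrow> ennreal \<Rightarrow> ennreal" where
  "ratio a b = (if b = 0 then \<infinity> else a / b)"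

definition APX :: "real ^ 'm::finite \<Rightarrow> real ^ 'm \<Rightarrow> ennreal" where
  "APX \<mu> \<sigma> = (INF M \<in> {M :: 'm mechanism. admissible_mech M}.
                  SUP F \<in> dist_class \<mu> \<sigma>. ratio (OPT F) (REV M F))"

definition rho :: "real \<Rightarrow> real" where
  "rho r = (THE \<rho>. 0 < \<rho> \<and> (2 * exp (\<rho> - 1) - 1) / \<rho>\<^sup>2 = r\<^sup>2 + 1)"

definition loglottery_ends :: "real \<Rightarrow> real \<Rightarrow> real \<times> real" where
  "loglottery_ends \<mu> \<sigma> = (THE (p1, p2). 0 < p1 \<and> 0 < p2 \<and>
       p1 * (1 + ln (p2 / p1)) = \<mu> \<and> p1 * (2 * p2 - p1) = \<mu>\<^sup>2 + \<sigma>\<^sup>2)"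

definition loglottery_cdf :: "real \<Rightarrow> real \<Rightarrow> real \<Rightarrow> real" where
  "loglottery_cdf \<mu> \<sigma> x = (let (p1, p2) = loglottery_ends \<mu> \<sigma> in
      if x < p1 then 0 else if p2 < x then 1 else
      (p2 * ln (x / p1) - (x - p1)) / (p2 * ln (p2 / p1) - (p2 - p1)))"

definition loglottery :: "real \<Rightarrow> real \<Rightarrow> real measure" where
  "loglottery \<mu> \<sigma> = (if \<sigma> = 0 then return borel \<mu> else interval_measure (loglottery_cdf \<mu> \<sigma>))"

text \<open>Random posted price P for a good of value t: sold iff t >= price.
  Probability of sale and expected payment.\<close>
definition sale_prob :: "real measure \<Rightarrow> real \<Rightarrow> real" where
  "sale_prob P t = measure P {..t}"

definition exp_payment :: "real measure \<Rightarrow> real \<Rightarrow> real" where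
  "exp_payment P t = (\<integral>p. indicator {..t} p * p \<partial>P)"

definition separate_loglottery :: "real ^ 'm::finite \<Rightarrow> real ^ 'm \<Rightarrow> 'm mechanism" where
  "separate_loglottery \<mu> \<sigma> =
     ((\<lambda>v. \<chi> j. sale_prob (loglottery (\<mu> $ j) (\<sigma> $ j)) (v $ j)),
      (\<lambda>v. \<Sum>j\<in>UNIV. exp_payment (loglottery (\<mu> $ j) (\<sigma> $ j)) (v $ j)))"

definition bundle_loglottery :: "real \<Rightarrow> real \<Rightarrow> ('m::finite) mechanism" where
  "bundle_loglottery m s =
     ((\<lambda>v. \<chi> j. sale_prob (loglottery m s) (\<Sum>i\<in>UNIV. v $ i)),
      (\<lambda>v. exp_payment (loglottery m s) (\<Sum>i\<in>UNIV. v $ i)))"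

end

theory Submission
  imports Defs "HOL-Real_Asymp.Real_Asymp"
begin

(* A random posted price P earns E_P[p; p <= v] from a buyer of value v. The log-lottery has
   density proportional to pi2/p - 1 on [pi1, pi2], so at v in [pi1, pi2] this expected payment is
   the concave quadratic ((pi2 - pi1)^2 - (pi2 - v)^2) / (2 D), D = pi2 ln(pi2/pi1) - (pi2 - pi1),
   and it dominates that quadratic for every v. Hence its revenue from a value of mean mu and
   second moment at most mu^2 + sigma^2 is at least a number fixed by these two moments, and the
   two equations defining pi1, pi2 make it exactly pi1 = mu / rho(sigma/mu). By individual
   rationality no truthful mechanism earns more than the expected total value, the sum of the
   mu_j. Selling separately adds the per-item bounds, with rho increasing in r; for the grand
   bundle the total value has mean mu_bar and, for independent items, variance at most
   sigma_bar^2. *)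

section \<open>The function rho\<close>

definition rho_lhs :: "real \<Rightarrow> real" where
  "rho_lhs x = (2 * exp (x - 1) - 1) / x\<^sup>2"

lemma exp_gt_add_one_self: "x \<noteq> 0 \<Longrightarrow> 1 + x < exp (x::real)"
  using ln_diff_less[of "exp x" 1] by simp

lemma rho_lhs_one [simp]: "rho_lhs 1 = 1"
  by (simp add: rho_lhs_def)

lemma rho_lhs_less_one:
  assumes "0 < x" "x < 1"
  shows "rho_lhs x < 1"
proof -
  let ?g = "\<lambda>y. y\<^sup>2 + 1 - 2 * exp (y - 1)"
  have "?g 1 < ?g x"
  proof (rule DERIV_neg_imp_decreasing_open[OF assms(2)])
    fix y :: real assume "x < y" "y < 1"
    then have "2 * y - 2 * exp (y - 1) < 0"
      using exp_gt_add_one_self[of "y - 1"] by simp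
    then show "\<exists>d. (?g has_real_derivative d) (at y) \<and> d < 0"
      by (auto intro!: derivative_eq_intros)
  qed (intro continuous_intros)
  then show ?thesis
    using assms by (simp add: rho_lhs_def divide_less_eq)
qed

lemma exp_mult_sub_two_pos:
  assumes "1 < (x::real)"
  shows "0 < exp (x - 1) * (x - 2) + 1"
proof -
  let ?k = "\<lambda>y. exp (y - 1) * (y - 2) + 1"
  have "?k 1 < ?k x"
  proof (rule DERIV_pos_imp_increasing_open[OF assms])
    fix y :: real assume "1 < y" "y < x"
    then show "\<exists>d. (?k has_real_derivative d) (at y) \<and> 0 < d"
      by (intro exI[of _ "exp (y - 1) * (y - 1)"])
         (auto intro!: derivative_eq_intros simp: algebra_simps)
  qed (intro continuous_intros)
  then show ?thesis by simp
qed

lemma rho_lhs_strict_mono: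
  assumes "1 \<le> a" "a < b"
  shows "rho_lhs a < rho_lhs b"
proof (rule DERIV_pos_imp_increasing_open[OF assms(2)])
  show "continuous_on {a..b} rho_lhs"
    unfolding rho_lhs_def using assms by (intro continuous_intros) auto
  fix x assume "a < x" "x < b"
  with assms have "1 < x" by simp
  then have "(rho_lhs has_real_derivative 2 * (exp (x - 1) * (x - 2) + 1) / x ^ 3) (at x)"
    unfolding rho_lhs_def
    by (auto intro!: derivative_eq_intros simp: field_simps power2_eq_square power3_eq_cube)
  moreover have "0 < 2 * (exp (x - 1) * (x - 2) + 1) / x ^ 3"
    using exp_mult_sub_two_pos[OF \<open>1 < x\<close>] \<open>1 < x\<close> by simp
  ultimately show "\<exists>d. (rho_lhs has_real_derivative d) (at x) \<and> 0 < d" by blast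
qed

lemma rho_lhs_at_top: "filterlim rho_lhs at_top at_top"
  unfolding rho_lhs_def by real_asymp

lemma rho_lhs_attains:
  assumes "1 \<le> y"
  shows "\<exists>x\<ge>1. rho_lhs x = y"
proof -
  obtain N where N: "\<And>x. N \<le> x \<Longrightarrow> y \<le> rho_lhs x"
    using rho_lhs_at_top[unfolded filterlim_at_top, rule_format, of y]
    by (auto simp: eventually_at_top_linorder)
  define b where "b = max 1 N"
  have "continuous_on {1..b} rho_lhs"
    unfolding rho_lhs_def by (intro continuous_intros) auto
  then obtain x where "1 \<le> x" "rho_lhs x = y"
    using IVT'[of rho_lhs 1 y b] N[of b] assms by (auto simp: b_def)
  then show ?thesis by blast
qed

lemma rho_eqI:
  assumes "0 < x" "rho_lhs x = r\<^sup>2 + 1"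
  shows "rho r = x"
  unfolding rho_def
proof (rule the_equality)
  show "0 < x \<and> (2 * exp (x - 1) - 1) / x\<^sup>2 = r\<^sup>2 + 1"
    using assms by (simp add: rho_lhs_def)
next
  have ge_one: "1 \<le> z" if "0 < z" "rho_lhs z = r\<^sup>2 + 1" for z
    using rho_lhs_less_one[of z] that by force
  fix z assume "0 < z \<and> (2 * exp (z - 1) - 1) / z\<^sup>2 = r\<^sup>2 + 1"
  then have "0 < z" "rho_lhs z = rho_lhs x"
    using assms by (simp_all add: rho_lhs_def)
  with ge_one assms have "1 \<le> z" "1 \<le> x" by auto
  with \<open>rho_lhs z = rho_lhs x\<close> show "z = x"
    using rho_lhs_strict_mono[of z x] rho_lhs_strict_mono[of x z]
    by (cases z x rule: linorder_cases) auto
qed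

lemma
  shows rho_ge_one: "1 \<le> rho r"
    and rho_lhs_rho: "rho_lhs (rho r) = r\<^sup>2 + 1"
proof -
  obtain x where "1 \<le> x" "rho_lhs x = r\<^sup>2 + 1"
    using rho_lhs_attains[of "r\<^sup>2 + 1"] by auto
  with rho_eqI[of x r] show "1 \<le> rho r" "rho_lhs (rho r) = r\<^sup>2 + 1" by simp_all
qed

lemma rho_zero: "rho 0 = 1"
  by (rule rho_eqI) simp_all

lemma rho_gt_one:
  assumes "r \<noteq> 0"
  shows "1 < rho r"
proof -
  have "rho_lhs (rho r) \<noteq> rho_lhs 1"
    using assms by (simp add: rho_lhs_rho)
  then have "rho r \<noteq> 1" by auto
  then show ?thesis
    using rho_ge_one[of r] by simp
qed

lemma rho_mono:
  assumes "0 \<le> r" "r \<le> s"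
  shows "rho r \<le> rho s"
proof (rule ccontr)
  assume "\<not> rho r \<le> rho s"
  then have "rho_lhs (rho s) < rho_lhs (rho r)"
    using rho_lhs_strict_mono rho_ge_one by simp
  moreover have "r\<^sup>2 \<le> s\<^sup>2" using assms by (intro power_mono)
  ultimately show False by (simp add: rho_lhs_rho)
qed

section \<open>Random posted prices\<close>

locale bounded_price_lottery = real_distribution P for P :: "real measure" +
  fixes K :: real
  assumes AE_price_bounds: "AE p in P. 0 \<le> p \<and> p \<le> K"
begin

lemma integrable_indicator_affine: "integrable P (\<lambda>p. indicator {..t} p * (a + b * p))"
proof (rule integrable_const_bound[where B = "\<bar>a\<bar> + \<bar>b\<bar> * K"])
  show "AE p in P. norm (indicator {..t} p * (a + b * p)) \<le> \<bar>a\<bar> + \<bar>b\<bar> * K"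
    using AE_price_bounds
  proof eventually_elim
    case (elim p)
    then have "\<bar>a + b * p\<bar> \<le> \<bar>a\<bar> + \<bar>b\<bar> * K"
      using abs_triangle_ineq[of a "b * p"] mult_left_mono[of "\<bar>p\<bar>" K "\<bar>b\<bar>"]
      by (simp add: abs_mult)
    then show ?case using elim by (simp add: indicator_def)
  qed
qed simp

lemma integrable_payment: "integrable P (\<lambda>p. indicator {..t} p * p)"
  using integrable_indicator_affine[of t 0 1] by simp

lemma sale_prob_bounds: "0 \<le> sale_prob P t" "sale_prob P t \<le> 1"
  by (simp_all add: sale_prob_def)

lemma exp_payment_nonneg: "0 \<le> exp_payment P t"
  unfolding exp_payment_def
  by (rule integral_nonneg_AE) (use AE_price_bounds in \<open>eventually_elim, simp\<close>)

lemma exp_payment_le: "exp_payment P t \<le> K"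
proof -
  have "exp_payment P t \<le> (\<integral>p. K \<partial>P)"
    unfolding exp_payment_def
  proof (rule integral_mono_AE[OF integrable_payment])
    show "AE p in P. indicator {..t} p * p \<le> K"
      using AE_price_bounds by eventually_elim (auto simp: indicator_def)
  qed simp
  then show ?thesis
    using prob_space by simp
qed

lemma mono_exp_payment: "mono (exp_payment P)"
proof
  fix s t :: real assume "s \<le> t"
  then show "exp_payment P s \<le> exp_payment P t"
    unfolding exp_payment_def
    by (intro integral_mono_AE integrable_payment)
       (use AE_price_bounds in \<open>eventually_elim, auto simp: indicator_def\<close>)
qed

lemma exp_payment_measurable [measurable]: "exp_payment P \<in> borel_measurable borel"
  using mono_exp_payment by (rule borel_measurable_mono)

lemma integrable_exp_payment:
  assumes "prob_space N" "X \<in> borel_measurable N"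
  shows "integrable N (\<lambda>x. exp_payment P (X x))"
proof -
  interpret N: prob_space N by fact
  show ?thesis
    using assms(2) exp_payment_nonneg exp_payment_le
    by (intro N.integrable_const_bound[where B = K]) auto
qed

lemma expected_utility:
  "sale_prob P t * v - exp_payment P t = (\<integral>p. indicator {..t} p * (v - p) \<partial>P)"
proof -
  have "(\<integral>p. indicator {..t} p * (v - p) \<partial>P)
      = (\<integral>p. indicator {..t} p * v \<partial>P) - (\<integral>p. indicator {..t} p * p \<partial>P)"
    using integrable_indicator_affine[of t v 0] integrable_payment[of t]
    by (subst Bochner_Integration.integral_diff[symmetric]) (auto simp: algebra_simps)
  then show ?thesis
    by (simp add: sale_prob_def exp_payment_def prob_space)
qed

lemma utility_nonneg: "0 \<le> sale_prob P v * v - exp_payment P v"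
  unfolding expected_utility by (rule integral_nonneg_AE) (auto simp: indicator_def)

text \<open>Reporting \<open>w\<close> instead of \<open>v\<close> only adds or removes sales at prices on the wrong side of \<open>v\<close>.\<close>
lemma utility_truthful: "sale_prob P w * v - exp_payment P w \<le> sale_prob P v * v - exp_payment P v"
  unfolding expected_utility
  using integrable_indicator_affine[of w v "-1"] integrable_indicator_affine[of v v "-1"]
  by (intro integral_mono_AE) (auto simp: indicator_def)

end

lemma bounded_price_lottery_return: "0 \<le> c \<Longrightarrow> bounded_price_lottery (return borel c) c"
  by (simp add: bounded_price_lottery_def bounded_price_lottery_axioms_def real_distribution_def
      real_distribution_axioms_def prob_space_return AE_return)

section \<open>The log-lottery\<close>

locale log_lottery_density =
  fixes p1 p2 :: real
  assumes p1_pos: "0 < p1" and p1_less_p2: "p1 < p2"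
begin

definition normalizer :: real where
  "normalizer = p2 * ln (p2 / p1) - (p2 - p1)"

definition price_density :: "real \<Rightarrow> real" where
  "price_density p = indicator {p1..p2} p * ((p2 / p - 1) / normalizer)"

definition price_cdf :: "real \<Rightarrow> real" where
  "price_cdf x = (if x < p1 then 0 else if p2 < x then 1
                  else (p2 * ln (x / p1) - (x - p1)) / normalizer)"

definition price_measure :: "real measure" where
  "price_measure = density lborel price_density"

definition payment_bound :: "real \<Rightarrow> real" where
  "payment_bound x = ((p2 - p1)\<^sup>2 - (p2 - x)\<^sup>2) / (2 * normalizer)"

lemma loglottery_cdf_eq_price_cdf:
  "loglottery_ends \<mu> \<sigma> = (p1, p2) \<Longrightarrow> loglottery_cdf \<mu> \<sigma> = price_cdf"
  by (simp add: fun_eq_iff loglottery_cdf_def price_cdf_def normalizer_def)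

lemma normalizer_pos: "0 < normalizer"
proof -
  have "ln (p1 / p2) < p1 / p2 - 1"
    using ln_diff_less[of "p1 / p2" 1] p1_pos p1_less_p2 by simp
  moreover have "ln (p1 / p2) = - ln (p2 / p1)"
    using p1_pos p1_less_p2 by (simp add: ln_div)
  ultimately have "p2 * (1 - p1 / p2) < p2 * ln (p2 / p1)"
    using p1_pos p1_less_p2 by (intro mult_strict_left_mono) auto
  moreover have "p2 * (1 - p1 / p2) = p2 - p1"
    using p1_pos p1_less_p2 by (simp add: field_simps)
  ultimately show ?thesis
    by (simp add: normalizer_def)
qed

lemma normalizer_nonzero [simp]: "normalizer \<noteq> 0"
  using normalizer_pos by simp

lemma price_cdf_at_p2: "(p2 * ln (p2 / p1) - (p2 - p1)) / normalizer = 1"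
  unfolding normalizer_def[symmetric] by simp

lemma price_density_measurable [measurable]: "price_density \<in> borel_measurable borel"
  unfolding price_density_def by measurable

lemma price_density_nonneg: "0 \<le> price_density p"
proof (cases "p \<in> {p1..p2}")
  case True
  with p1_pos have "1 \<le> p2 / p" by (simp add: le_divide_eq)
  then show ?thesis
    using normalizer_pos by (simp add: price_density_def)
qed (simp add: price_density_def)

lemma integral_price_density_Iic_interval:
  assumes "p1 \<le> x" "x \<le> p2"
  shows "(\<integral>p. price_density p * (indicator {..x} p * g p) \<partial>lborel)
       = (\<integral>p. indicator {p1..x} p *\<^sub>R ((p2 / p - 1) / normalizer * g p) \<partial>lborel)"
  using assms by (intro Bochner_Integration.integral_cong) (auto simp: price_density_def indicator_def)

lemma price_density_cdf:
  assumes "p1 \<le> x" "x \<le> p2"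
  shows "(\<integral>p. price_density p * indicator {..x} p \<partial>lborel)
       = (p2 * ln (x / p1) - (x - p1)) / normalizer"
proof -
  let ?H = "\<lambda>y. (p2 * ln (y / p1) - (y - p1)) / normalizer"
  have "(\<integral>p. indicator {p1..x} p *\<^sub>R ((p2 / p - 1) / normalizer * 1) \<partial>lborel) = ?H x - ?H p1"
  proof (rule integral_FTC_atLeastAtMost[OF assms(1)])
    fix y assume "p1 \<le> y" "y \<le> x"
    with p1_pos have "0 < y" by simp
    then have "(?H has_real_derivative (p2 / y - 1) / normalizer * 1) (at y)"
      using p1_pos by (auto intro!: derivative_eq_intros simp: field_simps)
    then show "(?H has_vector_derivative (p2 / y - 1) / normalizer * 1) (at y within {p1..x})"
      by (simp add: has_real_derivative_iff_has_vector_derivative has_vector_derivative_at_within)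
  qed (intro continuous_intros, use p1_pos in auto)
  then show ?thesis
    using integral_price_density_Iic_interval[OF assms, of "\<lambda>_. 1"] by simp
qed

lemma price_density_first_moment:
  assumes "p1 \<le> x" "x \<le> p2"
  shows "(\<integral>p. price_density p * (indicator {..x} p * p) \<partial>lborel) = payment_bound x"
proof -
  let ?G = "\<lambda>y. (p2 * y - y\<^sup>2 / 2) / normalizer"
  have "(\<integral>p. indicator {p1..x} p *\<^sub>R ((p2 / p - 1) / normalizer * p) \<partial>lborel)
      = (\<integral>p. indicator {p1..x} p *\<^sub>R ((p2 - p) / normalizer) \<partial>lborel)"
    using p1_pos by (intro Bochner_Integration.integral_cong) (auto simp: indicator_def field_simps)
  also have "\<dots> = ?G x - ?G p1"
  proof (rule integral_FTC_atLeastAtMost[OF assms(1)])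
    fix y
    have "(?G has_real_derivative (p2 - y) / normalizer) (at y)"
      by (auto intro!: derivative_eq_intros simp: field_simps)
    then show "(?G has_vector_derivative (p2 - y) / normalizer) (at y within {p1..x})"
      by (simp add: has_real_derivative_iff_has_vector_derivative has_vector_derivative_at_within)
  qed (intro continuous_intros, simp)
  also have "\<dots> = payment_bound x"
    by (simp add: payment_bound_def field_simps power2_eq_square)
  finally show ?thesis
    using integral_price_density_Iic_interval[OF assms, of "\<lambda>p. p"] by simp
qed

lemma integral_price_density_Iic_eq_price_cdf:
  "(\<integral>p. price_density p * indicator {..x} p \<partial>lborel) = price_cdf x"
proof -
  consider "x < p1" | "p1 \<le> x" "x \<le> p2" | "p2 < x" by linarith
  then show ?thesis
  proof cases
    case 1
    then have "(\<lambda>p. price_density p * indicator {..x} p) = (\<lambda>_. 0)"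
      by (auto simp: price_density_def indicator_def)
    with 1 show ?thesis by (simp add: price_cdf_def)
  next
    case 2
    then show ?thesis by (simp add: price_density_cdf price_cdf_def)
  next
    case 3
    then have "(\<lambda>p. price_density p * indicator {..x} p) = (\<lambda>p. price_density p * indicator {..p2} p)"
      by (auto simp: price_density_def indicator_def)
    with 3 show ?thesis
      using price_density_cdf[of p2] p1_less_p2 by (simp add: price_cdf_def price_cdf_at_p2)
  qed
qed

lemma integrable_price_density: "integrable lborel price_density"
proof -
  have "set_integrable lborel {p1..p2} (\<lambda>p. (p2 / p - 1) / normalizer)"
    using p1_pos by (intro borel_integrable_atLeastAtMost' continuous_intros) auto
  then show ?thesis
    unfolding set_integrable_def price_density_def[abs_def] by simp
qed

lemma real_distribution_price_measure: "real_distribution price_measure"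
proof -
  have "price_density = (\<lambda>p. price_density p * indicator {..p2} p)"
    by (auto simp: price_density_def indicator_def)
  then have "(\<integral>p. price_density p \<partial>lborel) = 1"
    using integral_price_density_Iic_eq_price_cdf[of p2] p1_less_p2 by (simp add: price_cdf_def price_cdf_at_p2)
  then have "emeasure price_measure UNIV = 1"
    using integrable_price_density price_density_nonneg
    by (simp add: price_measure_def emeasure_density nn_integral_eq_integral)
  then show ?thesis
    by (auto simp: real_distribution_def real_distribution_axioms_def price_measure_def
        intro!: prob_spaceI)
qed

lemma cdf_price_measure: "cdf price_measure = price_cdf"
proof
  fix x
  have "cdf price_measure x = (\<integral>p. indicator {..x} p \<partial>price_measure)"
    using real_distribution_price_measure
    by (simp add: cdf_def real_distribution.space_eq_univ)
  also have "\<dots> = price_cdf x"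
    unfolding price_measure_def using price_density_nonneg
    by (subst integral_density) (auto simp: integral_price_density_Iic_eq_price_cdf)
  finally show "cdf price_measure x = price_cdf x" .
qed

lemma interval_measure_price_cdf: "interval_measure price_cdf = price_measure"
proof -
  interpret real_distribution price_measure
    by (rule real_distribution_price_measure)
  note cdf_props = cdf_nondecreasing cdf_is_right_cont cdf_lim_at_bot cdf_lim_at_top_prob
  have "real_distribution (interval_measure price_cdf)"
    by (rule real_distribution_interval_measure) (use cdf_props in \<open>auto simp: cdf_price_measure\<close>)
  moreover have "cdf (interval_measure price_cdf) = price_cdf"
    by (rule cdf_interval_measure) (use cdf_props in \<open>auto simp: cdf_price_measure\<close>)
  ultimately show ?thesis
    using cdf_unique real_distribution_price_measure cdf_price_measure by metis
qed

lemma bounded_price_lottery_price_measure: "bounded_price_lottery price_measure p2"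
proof -
  have "AE p in price_measure. 0 \<le> p \<and> p \<le> p2"
    unfolding price_measure_def using p1_pos
    by (subst AE_density) (auto simp: price_density_def indicator_def)
  then show ?thesis
    using real_distribution_price_measure
    by (simp add: bounded_price_lottery_def bounded_price_lottery_axioms_def)
qed

interpretation bounded_price_lottery price_measure p2
  by (rule bounded_price_lottery_price_measure)

lemma exp_payment_price_measure:
  assumes "p1 \<le> x" "x \<le> p2"
  shows "exp_payment price_measure x = payment_bound x"
  unfolding exp_payment_def price_measure_def using price_density_nonneg assms
  by (subst integral_density) (auto simp: price_density_first_moment)

lemma payment_bound_le_exp_payment: "payment_bound x \<le> exp_payment price_measure x"
proof -
  consider "x < p1" | "p1 \<le> x" "x \<le> p2" | "p2 < x" by linarith
  then show ?thesis
  proof cases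
    case 1
    then have "(p2 - p1)\<^sup>2 \<le> (p2 - x)\<^sup>2"
      using p1_less_p2 by (intro power_mono) auto
    then have "payment_bound x \<le> 0"
      using normalizer_pos by (simp add: payment_bound_def divide_nonpos_pos)
    then show ?thesis
      using exp_payment_nonneg by (rule order_trans)
  next
    case 2
    then show ?thesis by (simp add: exp_payment_price_measure)
  next
    case 3
    have "payment_bound x \<le> payment_bound p2"
      using normalizer_pos by (simp add: payment_bound_def divide_right_mono)
    also have "\<dots> = exp_payment price_measure p2"
      using p1_less_p2 by (simp add: exp_payment_price_measure)
    also have "\<dots> \<le> exp_payment price_measure x"
      using 3 mono_exp_payment by (simp add: mono_def)
    finally show ?thesis .
  qed
qed

text \<open>Since \<open>payment_bound\<close> is a quadratic, its expectation depends only on the first two moments of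
  the value; the two equations defining \<open>p1, p2\<close> make it exactly \<open>p1\<close>.\<close>
lemma expected_exp_payment_ge:
  assumes N: "prob_space N"
    and X: "integrable N X" "integrable N (\<lambda>x. (X x)\<^sup>2)"
    and mean: "prob_space.expectation N X = p1 * (1 + ln (p2 / p1))"
    and second_moment: "prob_space.expectation N (\<lambda>x. (X x)\<^sup>2) \<le> p1 * (2 * p2 - p1)"
  shows "p1 \<le> (\<integral>x. exp_payment price_measure (X x) \<partial>N)"
proof -
  interpret N: prob_space N by (rule N)
  define c where "c = ((p2 - p1)\<^sup>2 - p2\<^sup>2) / (2 * normalizer)"
  have quadratic: "payment_bound y = c + p2 / normalizer * y - 1 / (2 * normalizer) * y\<^sup>2" for y
    by (simp add: payment_bound_def c_def field_simps power2_eq_square)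
  have numerator:
    "(p2 - p1)\<^sup>2 - p2\<^sup>2 + 2 * p2 * N.expectation X - p1 * (2 * p2 - p1) = 2 * normalizer * p1"
    unfolding mean normalizer_def by (simp add: algebra_simps power2_eq_square)
  have "p1 = (2 * normalizer * p1) / (2 * normalizer)"
    by simp
  also have "\<dots> = c + p2 / normalizer * N.expectation X - 1 / (2 * normalizer) * (p1 * (2 * p2 - p1))"
    unfolding numerator[symmetric] c_def by (simp add: field_simps)
  also have "\<dots> \<le> c + p2 / normalizer * N.expectation X
                   - 1 / (2 * normalizer) * N.expectation (\<lambda>x. (X x)\<^sup>2)"
    using second_moment normalizer_pos by (simp add: divide_right_mono)
  also have "\<dots> = (\<integral>x. payment_bound (X x) \<partial>N)"
    unfolding quadratic using X by (simp add: N.prob_space)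
  also have "\<dots> \<le> (\<integral>x. exp_payment price_measure (X x) \<partial>N)"
    using X payment_bound_le_exp_payment
    by (intro integral_mono integrable_exp_payment[OF N borel_measurable_integrable])
       (auto simp: quadratic)
  finally show ?thesis .
qed

end

section \<open>Revenue of the log-lottery from a single value\<close>

text \<open>With \<open>\<rho> = \<mu> / p1\<close> the first defining equation reads \<open>p2 = p1 * exp (\<rho> - 1)\<close>, and the second
  becomes \<open>rho_lhs \<rho> = (\<sigma> / \<mu>)\<^sup>2 + 1\<close>.\<close>
lemma loglottery_ends_solve:
  fixes \<mu> \<sigma> :: real
  assumes "0 < \<mu>"
  defines "\<rho> \<equiv> rho (\<sigma> / \<mu>)"
  shows "0 < \<mu> / \<rho>" "0 < \<mu> / \<rho> * exp (\<rho> - 1)"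
    and "\<mu> / \<rho> * (1 + ln (\<mu> / \<rho> * exp (\<rho> - 1) / (\<mu> / \<rho>))) = \<mu>"
    and "\<mu> / \<rho> * (2 * (\<mu> / \<rho> * exp (\<rho> - 1)) - \<mu> / \<rho>) = \<mu>\<^sup>2 + \<sigma>\<^sup>2"
proof -
  have "1 \<le> \<rho>" "rho_lhs \<rho> = (\<sigma> / \<mu>)\<^sup>2 + 1"
    unfolding \<rho>_def by (rule rho_ge_one, rule rho_lhs_rho)
  with assms show "0 < \<mu> / \<rho>" "0 < \<mu> / \<rho> * exp (\<rho> - 1)"
    "\<mu> / \<rho> * (1 + ln (\<mu> / \<rho> * exp (\<rho> - 1) / (\<mu> / \<rho>))) = \<mu>"
    "\<mu> / \<rho> * (2 * (\<mu> / \<rho> * exp (\<rho> - 1)) - \<mu> / \<rho>) = \<mu>\<^sup>2 + \<sigma>\<^sup>2"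
    by (simp_all add: rho_lhs_def field_simps power2_eq_square)
qed

lemma loglottery_ends_unique:
  fixes \<mu> \<sigma> a b :: real
  assumes "0 < \<mu>" "0 < a" "0 < b"
    and mean: "a * (1 + ln (b / a)) = \<mu>" and second_moment: "a * (2 * b - a) = \<mu>\<^sup>2 + \<sigma>\<^sup>2"
  defines "\<rho> \<equiv> rho (\<sigma> / \<mu>)"
  shows "a = \<mu> / \<rho>" "b = \<mu> / \<rho> * exp (\<rho> - 1)"
proof -
  define x where "x = 1 + ln (b / a)"
  have "0 < x"
    using mean \<open>0 < a\<close> \<open>0 < \<mu>\<close> by (metis x_def zero_less_mult_pos)
  have a: "a = \<mu> / x" and b: "b = a * exp (x - 1)"
    using mean \<open>0 < a\<close> \<open>0 < b\<close> \<open>0 < x\<close> by (simp_all add: x_def field_simps)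
  have "rho_lhs x = a * (2 * b - a) / \<mu>\<^sup>2"
    using \<open>0 < x\<close> \<open>0 < \<mu>\<close> unfolding rho_lhs_def b a by (simp add: field_simps power2_eq_square)
  also have "\<dots> = (\<sigma> / \<mu>)\<^sup>2 + 1"
    using \<open>0 < \<mu>\<close> second_moment by (simp add: field_simps power2_eq_square)
  finally have "\<rho> = x"
    unfolding \<rho>_def using \<open>0 < x\<close> by (rule rho_eqI[rotated])
  then show "a = \<mu> / \<rho>" "b = \<mu> / \<rho> * exp (\<rho> - 1)"
    using a b by simp_all
qed

lemma loglottery_ends_eq:
  fixes \<mu> \<sigma> :: real
  assumes "0 < \<mu>"
  defines "\<rho> \<equiv> rho (\<sigma> / \<mu>)"
  shows "loglottery_ends \<mu> \<sigma> = (\<mu> / \<rho>, \<mu> / \<rho> * exp (\<rho> - 1))"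
  unfolding loglottery_ends_def
proof (rule the_equality, goal_cases)
  case 1
  then show ?case
    using loglottery_ends_solve[OF assms(1), of \<sigma>] by (simp add: \<rho>_def)
next
  case (2 ends)
  obtain a b where ends: "ends = (a, b)"
    by fastforce
  with 2 have "0 < a" "0 < b" "a * (1 + ln (b / a)) = \<mu>" "a * (2 * b - a) = \<mu>\<^sup>2 + \<sigma>\<^sup>2"
    by simp_all
  from loglottery_ends_unique[OF assms(1) this] show ?case
    by (simp add: ends \<rho>_def)
qed

lemma loglottery_eq_price_measure:
  fixes \<mu> \<sigma> :: real
  assumes "0 < \<mu>" "0 < \<sigma>"
  defines "\<rho> \<equiv> rho (\<sigma> / \<mu>)"
  shows "log_lottery_density (\<mu> / \<rho>) (\<mu> / \<rho> * exp (\<rho> - 1))"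
    and "loglottery \<mu> \<sigma> = log_lottery_density.price_measure (\<mu> / \<rho>) (\<mu> / \<rho> * exp (\<rho> - 1))"
proof -
  have "1 < \<rho>"
    unfolding \<rho>_def using assms by (intro rho_gt_one) simp
  then have "\<mu> / \<rho> * 1 < \<mu> / \<rho> * exp (\<rho> - 1)"
    using assms by (intro mult_strict_left_mono) auto
  with assms \<open>1 < \<rho>\<close> show L: "log_lottery_density (\<mu> / \<rho>) (\<mu> / \<rho> * exp (\<rho> - 1))"
    by unfold_locales simp_all
  have "loglottery_cdf \<mu> \<sigma> = log_lottery_density.price_cdf (\<mu> / \<rho>) (\<mu> / \<rho> * exp (\<rho> - 1))"
    using loglottery_ends_eq[OF assms(1), of \<sigma>]
    by (intro log_lottery_density.loglottery_cdf_eq_price_cdf[OF L]) (simp add: \<rho>_def)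
  then show "loglottery \<mu> \<sigma> = log_lottery_density.price_measure (\<mu> / \<rho>) (\<mu> / \<rho> * exp (\<rho> - 1))"
    using assms log_lottery_density.interval_measure_price_cdf[OF L] by (simp add: loglottery_def)
qed

lemma bounded_price_lottery_loglottery:
  assumes "0 < \<mu>" "0 \<le> \<sigma>"
  shows "\<exists>K. bounded_price_lottery (loglottery \<mu> \<sigma>) K"
proof (cases "\<sigma> = 0")
  case True
  then show ?thesis
    using bounded_price_lottery_return[of \<mu>] assms by (auto simp: loglottery_def)
next
  case False
  with assms show ?thesis
    using loglottery_eq_price_measure log_lottery_density.bounded_price_lottery_price_measure
    by (metis order_le_less)
qed

lemma (in prob_space) variance_le_square:
  "sqrt (variance X) \<le> s \<Longrightarrow> variance X \<le> s\<^sup>2"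
  by (rule sqrt_le_D)

lemma (in prob_space) loglottery_expected_payment_ge:
  assumes X: "integrable M X" "integrable M (\<lambda>x. (X x)\<^sup>2)"
    and mean: "expectation X = \<mu>" and sd: "sqrt (variance X) \<le> \<sigma>"
    and "0 < \<mu>" "0 \<le> \<sigma>"
  shows "\<mu> / rho (\<sigma> / \<mu>) \<le> (\<integral>x. exp_payment (loglottery \<mu> \<sigma>) (X x) \<partial>M)"
proof (cases "\<sigma> = 0")
  case True
  have "integrable M (\<lambda>x. (X x - expectation X)\<^sup>2)"
    using X by (simp add: power2_diff)
  moreover have "variance X = 0"
    using variance_le_square[OF sd] variance_positive[of X] True by simp
  ultimately have "AE x in M. X x = \<mu>"
    using integral_nonneg_eq_0_iff_AE[of M "\<lambda>x. (X x - expectation X)\<^sup>2"] mean by simp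
  moreover have "exp_payment (loglottery \<mu> \<sigma>) \<mu> = \<mu>"
    using True by (simp add: loglottery_def exp_payment_def integral_return)
  moreover obtain K where "bounded_price_lottery (loglottery \<mu> \<sigma>) K"
    using bounded_price_lottery_loglottery \<open>0 < \<mu>\<close> \<open>0 \<le> \<sigma>\<close> by blast
  ultimately have "(\<integral>x. exp_payment (loglottery \<mu> \<sigma>) (X x) \<partial>M) = (\<integral>x. \<mu> \<partial>M)"
    using X(1) by (intro integral_cong_AE)
      (auto elim!: eventually_mono intro: measurable_compose[OF borel_measurable_integrable]
        bounded_price_lottery.exp_payment_measurable)
  then show ?thesis
    using True by (simp add: rho_zero prob_space)
next
  case False
  with \<open>0 \<le> \<sigma>\<close> have "0 < \<sigma>" by simp
  define \<rho> where "\<rho> = rho (\<sigma> / \<mu>)"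
  interpret L: log_lottery_density "\<mu> / \<rho>" "\<mu> / \<rho> * exp (\<rho> - 1)"
    unfolding \<rho>_def using \<open>0 < \<mu>\<close> \<open>0 < \<sigma>\<close> by (rule loglottery_eq_price_measure)
  have "expectation (\<lambda>x. (X x)\<^sup>2) = variance X + \<mu>\<^sup>2"
    using variance_eq[OF X] mean by simp
  also have "\<dots> \<le> \<sigma>\<^sup>2 + \<mu>\<^sup>2"
    using variance_le_square[OF sd] by simp
  finally have "\<mu> / \<rho> \<le> (\<integral>x. exp_payment L.price_measure (X x) \<partial>M)"
    using loglottery_ends_solve[OF \<open>0 < \<mu>\<close>, of \<sigma>] mean X
    by (intro L.expected_exp_payment_ge prob_space_axioms) (simp_all add: \<rho>_def)
  then show ?thesis
    using loglottery_eq_price_measure(2)[OF \<open>0 < \<mu>\<close> \<open>0 < \<sigma>\<close>] by (simp add: \<rho>_def)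
qed

section \<open>Separate sale and grand bundle\<close>

lemma (in prob_space) variance_sum_indep:
  fixes X :: "'i \<Rightarrow> 'a \<Rightarrow> real"
  assumes "finite I" and indep: "indep_vars (\<lambda>_. borel) X I"
    and X: "\<And>i. i \<in> I \<Longrightarrow> integrable M (X i)" "\<And>i. i \<in> I \<Longrightarrow> integrable M (\<lambda>x. (X i x)\<^sup>2)"
  shows "integrable M (\<lambda>x. (\<Sum>i\<in>I. X i x)\<^sup>2)"
    and "variance (\<lambda>x. \<Sum>i\<in>I. X i x) = (\<Sum>i\<in>I. variance (X i))"
proof -
  have product: "integrable M (\<lambda>x. X i x * X j x) \<and>
      expectation (\<lambda>x. X i x * X j x)
        = expectation (X i) * expectation (X j) + (if i = j then variance (X i) else 0)"
    if "i \<in> I" "j \<in> I" for i j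
  proof (cases "i = j")
    case True
    then show ?thesis
      using that X variance_eq[of "X i"] by (simp add: power2_eq_square)
  next
    case False
    have "indep_vars (\<lambda>_. borel) X {i, j}"
      using indep by (rule indep_vars_subset) (use that in auto)
    then have "integrable M (\<lambda>x. \<Prod>k\<in>{i, j}. X k x)"
      "expectation (\<lambda>x. \<Prod>k\<in>{i, j}. X k x) = (\<Prod>k\<in>{i, j}. expectation (X k))"
      using that X by (auto intro!: indep_vars_integrable indep_vars_lebesgue_integral)
    with False show ?thesis by simp
  qed
  have square: "(\<Sum>i\<in>I. X i x)\<^sup>2 = (\<Sum>i\<in>I. \<Sum>j\<in>I. X i x * X j x)" for x
    by (simp add: power2_eq_square sum_product)
  show integrable_square: "integrable M (\<lambda>x. (\<Sum>i\<in>I. X i x)\<^sup>2)"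
    unfolding square using product by auto
  have "expectation (\<lambda>x. (\<Sum>i\<in>I. X i x)\<^sup>2)
      = (\<Sum>i\<in>I. \<Sum>j\<in>I. expectation (X i) * expectation (X j) + (if i = j then variance (X i) else 0))"
    unfolding square using product by (simp add: Bochner_Integration.integral_sum)
  also have "\<dots> = (\<Sum>i\<in>I. expectation (X i))\<^sup>2 + (\<Sum>i\<in>I. variance (X i))"
    using \<open>finite I\<close> by (simp add: sum.distrib power2_eq_square sum_product)
  finally have second_moment: "expectation (\<lambda>x. (\<Sum>i\<in>I. X i x)\<^sup>2)
      = (\<Sum>i\<in>I. expectation (X i))\<^sup>2 + (\<Sum>i\<in>I. variance (X i))" .
  have "integrable M (\<lambda>x. \<Sum>i\<in>I. X i x)"
    using X by auto
  then have "variance (\<lambda>x. \<Sum>i\<in>I. X i x)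
      = expectation (\<lambda>x. (\<Sum>i\<in>I. X i x)\<^sup>2) - (expectation (\<lambda>x. \<Sum>i\<in>I. X i x))\<^sup>2"
    using integrable_square by (rule variance_eq)
  also have "\<dots> = (\<Sum>i\<in>I. variance (X i))"
    using second_moment X by (simp add: Bochner_Integration.integral_sum)
  finally show "variance (\<lambda>x. \<Sum>i\<in>I. X i x) = (\<Sum>i\<in>I. variance (X i))" .
qed

lemma dist_classD:
  assumes "F \<in> dist_class \<mu> \<sigma>"
  shows "prob_space F" "sets F = sets borel" "AE v in F. v \<in> nonneg_vecs"
    and "integrable F (\<lambda>v. v $ j)" "integrable F (\<lambda>v. (v $ j)\<^sup>2)"
    and "prob_space.expectation F (\<lambda>v. v $ j) = \<mu> $ j"
    and "sqrt (prob_space.variance F (\<lambda>v. v $ j)) \<le> \<sigma> $ j"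
  using assms unfolding dist_class_def by blast+

lemma OPT_le_sum_means:
  fixes \<mu> \<sigma> :: "real ^ 'm::finite"
  assumes F: "F \<in> dist_class \<mu> \<sigma>"
  shows "OPT F \<le> ennreal (\<Sum>j\<in>UNIV. \<mu> $ j)"
  unfolding OPT_def
proof (rule SUP_least)
  fix A :: "'m mechanism"
  assume "A \<in> {A. admissible_mech A}"
  then have truthful: "truthful A" by (simp add: admissible_mech_def)
  have payment_le: "snd A v \<le> (\<Sum>j\<in>UNIV. v $ j)" if v: "v \<in> nonneg_vecs" for v
  proof -
    have "0 \<le> fst A v \<bullet> v - snd A v" "\<And>j. fst A v $ j \<le> 1"
      using truthful v unfolding truthful_def by auto
    moreover have "fst A v \<bullet> v \<le> (\<Sum>j\<in>UNIV. v $ j)"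
      unfolding inner_vec_def using v calculation(2) truthful
      by (intro sum_mono) (auto simp: nonneg_vecs_def truthful_def intro!: mult_left_le_one_le)
    ultimately show ?thesis by simp
  qed
  note F' = dist_classD[OF F]
  have "REV A F \<le> (\<integral>\<^sup>+ v. ennreal (\<Sum>j\<in>UNIV. v $ j) \<partial>F)"
    unfolding REV_def using F'(3)
    by (intro nn_integral_mono_AE) (auto elim!: eventually_mono intro!: ennreal_leI payment_le)
  also have "\<dots> = ennreal (\<integral>v. (\<Sum>j\<in>UNIV. v $ j) \<partial>F)"
    using F'(3,4)
    by (intro nn_integral_eq_integral) (auto elim!: eventually_mono simp: nonneg_vecs_def intro!: sum_nonneg)
  also have "(\<integral>v. (\<Sum>j\<in>UNIV. v $ j) \<partial>F) = (\<Sum>j\<in>UNIV. \<mu> $ j)"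
    using F'(4,6) by (simp add: Bochner_Integration.integral_sum)
  finally show "REV A F \<le> ennreal (\<Sum>j\<in>UNIV. \<mu> $ j)" .
qed

lemma ratio_le:
  assumes "a \<le> ennreal S" "ennreal (S / r) \<le> b" "0 < S" "0 < r"
  shows "ratio a b \<le> ennreal r"
proof -
  have "b \<noteq> 0"
    using assms by (metis divide_pos_pos ennreal_eq_0_iff not_le order_antisym_conv zero_le)
  have "a / b \<le> ennreal S / b"
    using assms(1) by (rule divide_right_mono_ennreal)
  also have "\<dots> \<le> ennreal r"
  proof (cases b)
    case (real b')
    with assms have "S / r \<le> b'" "0 < S / r" by auto
    then have "0 < b'" by linarith
    then have "ennreal S / b = ennreal (S / b')"
      using real assms by (simp add: divide_ennreal)
    also have "\<dots> \<le> ennreal (S / (S / r))"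
      using \<open>S / r \<le> b'\<close> \<open>0 < S / r\<close> \<open>0 < b'\<close> assms
      by (intro ennreal_leI divide_left_mono) (auto simp: zero_less_mult_iff)
    finally show ?thesis
      using assms by simp
  qed simp
  finally show ?thesis
    using \<open>b \<noteq> 0\<close> by (simp add: ratio_def)
qed

lemma REV_eq_integral:
  assumes "integrable F (snd A)" "\<And>v. 0 \<le> snd A v"
  shows "REV A F = ennreal (\<integral>v. snd A v \<partial>F)"
  unfolding REV_def using assms by (intro nn_integral_eq_integral) auto

lemma loglottery_bounded_choice:
  fixes \<mu> \<sigma> :: "real ^ 'm::finite"
  assumes "\<forall>j. 0 < \<mu> $ j" "\<forall>j. 0 \<le> \<sigma> $ j"
  obtains K where "\<And>j. bounded_price_lottery (loglottery (\<mu> $ j) (\<sigma> $ j)) (K j)"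
proof -
  have "\<forall>j. \<exists>K. bounded_price_lottery (loglottery (\<mu> $ j) (\<sigma> $ j)) K"
    using bounded_price_lottery_loglottery assms by blast
  then show thesis
    using that by metis
qed

lemma admissible_separate_loglottery:
  fixes \<mu> \<sigma> :: "real ^ 'm::finite"
  assumes "\<forall>j. 0 < \<mu> $ j" "\<forall>j. 0 \<le> \<sigma> $ j"
  shows "admissible_mech (separate_loglottery \<mu> \<sigma>)"
proof -
  obtain K where K: "\<And>j. bounded_price_lottery (loglottery (\<mu> $ j) (\<sigma> $ j)) (K j)"
    using loglottery_bounded_choice assms by blast
  let ?P = "\<lambda>j. loglottery (\<mu> $ j) (\<sigma> $ j)"
  have utility: "fst (separate_loglottery \<mu> \<sigma>) w \<bullet> v - snd (separate_loglottery \<mu> \<sigma>) w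
      = (\<Sum>j\<in>UNIV. sale_prob (?P j) (w $ j) * v $ j - exp_payment (?P j) (w $ j))" for v w
    by (simp add: separate_loglottery_def inner_vec_def sum_subtractf)
  show ?thesis
    unfolding admissible_mech_def truthful_def utility
    using bounded_price_lottery.sale_prob_bounds[OF K] bounded_price_lottery.exp_payment_nonneg[OF K]
      bounded_price_lottery.utility_nonneg[OF K] bounded_price_lottery.utility_truthful[OF K]
      bounded_price_lottery.exp_payment_measurable[OF K]
    by (auto simp: separate_loglottery_def intro!: sum_nonneg sum_mono)
qed

lemma REV_separate_loglottery_ge:
  fixes \<mu> \<sigma> :: "real ^ 'm::finite"
  assumes "\<forall>j. 0 < \<mu> $ j" "\<forall>j. 0 \<le> \<sigma> $ j"
    and R: "\<forall>j. \<sigma> $ j / \<mu> $ j \<le> R"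
    and F: "F \<in> dist_class \<mu> \<sigma>"
  shows "ennreal ((\<Sum>j\<in>UNIV. \<mu> $ j) / rho R) \<le> REV (separate_loglottery \<mu> \<sigma>) F"
proof -
  obtain K where K: "\<And>j. bounded_price_lottery (loglottery (\<mu> $ j) (\<sigma> $ j)) (K j)"
    using loglottery_bounded_choice assms by blast
  let ?pay = "\<lambda>j v. exp_payment (loglottery (\<mu> $ j) (\<sigma> $ j)) (v $ j)"
  note F' = dist_classD[OF F]
  interpret prob_space F by (rule F'(1))
  have integrable: "integrable F (?pay j)" for j
    using K F'(4) by (intro bounded_price_lottery.integrable_exp_payment prob_space_axioms
        borel_measurable_integrable)
  have "(\<Sum>j\<in>UNIV. \<mu> $ j) / rho R = (\<Sum>j\<in>UNIV. \<mu> $ j / rho R)"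
    by (simp add: sum_divide_distrib)
  also have "\<dots> \<le> (\<Sum>j\<in>UNIV. \<mu> $ j / rho (\<sigma> $ j / \<mu> $ j))"
  proof (intro sum_mono divide_left_mono)
    fix j
    show "rho (\<sigma> $ j / \<mu> $ j) \<le> rho R"
      using assms by (auto intro!: rho_mono divide_nonneg_pos)
    show "0 \<le> \<mu> $ j" "0 < rho R * rho (\<sigma> $ j / \<mu> $ j)"
      using assms rho_ge_one[of R] rho_ge_one[of "\<sigma> $ j / \<mu> $ j"] by (auto intro: less_imp_le)
  qed
  also have "\<dots> \<le> (\<Sum>j\<in>UNIV. \<integral>v. ?pay j v \<partial>F)"
    using F' assms by (intro sum_mono loglottery_expected_payment_ge) auto
  also have "\<dots> = (\<integral>v. snd (separate_loglottery \<mu> \<sigma>) v \<partial>F)"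
    using integrable by (simp add: separate_loglottery_def Bochner_Integration.integral_sum)
  finally show ?thesis
    using integrable bounded_price_lottery.exp_payment_nonneg[OF K]
    by (subst REV_eq_integral) (auto simp: separate_loglottery_def intro!: ennreal_leI sum_nonneg)
qed

lemma REV_bundle_loglottery_ge:
  fixes \<mu> \<sigma> :: "real ^ 'm::finite"
  assumes "\<forall>j. 0 < \<mu> $ j" "\<forall>j. 0 \<le> \<sigma> $ j"
    and F: "F \<in> dist_class \<mu> \<sigma>"
    and indep: "prob_space.indep_vars F (\<lambda>_. borel) (\<lambda>j v. v $ j) UNIV"
  defines "\<mu>' \<equiv> \<Sum>j\<in>UNIV. \<mu> $ j" and "\<sigma>' \<equiv> sqrt (\<Sum>j\<in>UNIV. (\<sigma> $ j)\<^sup>2)"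
  shows "ennreal (\<mu>' / rho (\<sigma>' / \<mu>')) \<le> REV (bundle_loglottery \<mu>' \<sigma>' :: 'm mechanism) F"
proof -
  note F' = dist_classD[OF F]
  interpret prob_space F by (rule F'(1))
  let ?X = "\<lambda>v :: real ^ 'm. \<Sum>j\<in>UNIV. v $ j"
  have "0 < \<mu>'"
    unfolding \<mu>'_def using assms by (intro sum_pos) auto
  have "0 \<le> \<sigma>'"
    unfolding \<sigma>'_def by (simp add: sum_nonneg)
  have X: "integrable F ?X" "integrable F (\<lambda>v. (?X v)\<^sup>2)"
    using variance_sum_indep(1)[OF _ indep] F' by auto
  have mean: "expectation ?X = \<mu>'"
    using F' by (simp add: \<mu>'_def Bochner_Integration.integral_sum)
  have "variance ?X = (\<Sum>j\<in>UNIV. variance (\<lambda>v. v $ j))"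
    using variance_sum_indep(2)[OF _ indep] F' by auto
  also have "\<dots> \<le> (\<Sum>j\<in>UNIV. (\<sigma> $ j)\<^sup>2)"
    using F'(7) by (intro sum_mono variance_le_square)
  finally have "sqrt (variance ?X) \<le> \<sigma>'"
    unfolding \<sigma>'_def by simp
  then have "\<mu>' / rho (\<sigma>' / \<mu>') \<le> (\<integral>v. exp_payment (loglottery \<mu>' \<sigma>') (?X v) \<partial>F)"
    using X mean \<open>0 < \<mu>'\<close> \<open>0 \<le> \<sigma>'\<close> by (intro loglottery_expected_payment_ge)
  moreover obtain K where K: "bounded_price_lottery (loglottery \<mu>' \<sigma>') K"
    using bounded_price_lottery_loglottery \<open>0 < \<mu>'\<close> \<open>0 \<le> \<sigma>'\<close> by blast
  ultimately show ?thesis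
    using X(1) by (subst REV_eq_integral)
      (auto simp: bundle_loglottery_def intro!: ennreal_leI borel_measurable_integrable prob_space_axioms
        bounded_price_lottery.integrable_exp_payment[OF K] bounded_price_lottery.exp_payment_nonneg[OF K])
qed

theorem theorem4:
  fixes \<mu> \<sigma> :: "real ^ 'm"
  assumes mu_pos: "\<forall>j. 0 < \<mu> $ j"
    and sigma_nonneg: "\<forall>j. 0 \<le> \<sigma> $ j"
  defines "r_max \<equiv> Max (range (\<lambda>j. \<sigma> $ j / \<mu> $ j))"
    and "mu_bar \<equiv> (\<Sum>j\<in>UNIV. \<mu> $ j)"
    and "sigma_bar \<equiv> sqrt (\<Sum>j\<in>UNIV. (\<sigma> $ j)\<^sup>2)"
  shows "(\<forall>F \<in> dist_class \<mu> \<sigma>.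
            ratio (OPT F) (REV (separate_loglottery \<mu> \<sigma>) F) \<le> ennreal (rho r_max))
       \<and> APX \<mu> \<sigma> \<le> ennreal (rho r_max)
       \<and> (\<forall>F \<in> dist_class \<mu> \<sigma>.
            prob_space.indep_vars F (\<lambda>_. borel) (\<lambda>j v. v $ j) UNIV \<longrightarrow>
            ratio (OPT F) (REV (bundle_loglottery mu_bar sigma_bar :: 'm mechanism) F)
              \<le> ennreal (rho (sigma_bar / mu_bar)))"
proof -
  have "0 < mu_bar"
    unfolding mu_bar_def using mu_pos by (intro sum_pos) auto
  have rho_pos: "0 < rho r" for r
    using rho_ge_one[of r] by simp
  have "\<forall>j. \<sigma> $ j / \<mu> $ j \<le> r_max"
    unfolding r_max_def by simp
  then have separate: "\<forall>F \<in> dist_class \<mu> \<sigma>.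
      ratio (OPT F) (REV (separate_loglottery \<mu> \<sigma>) F) \<le> ennreal (rho r_max)"
    using OPT_le_sum_means REV_separate_loglottery_ge[OF mu_pos sigma_nonneg] \<open>0 < mu_bar\<close> rho_pos
    unfolding mu_bar_def by (blast intro: ratio_le)
  moreover have "APX \<mu> \<sigma> \<le> ennreal (rho r_max)"
    unfolding APX_def using admissible_separate_loglottery[OF mu_pos sigma_nonneg] separate
    by (intro INF_lower2[of "separate_loglottery \<mu> \<sigma>"] SUP_least) auto
  moreover have "\<forall>F \<in> dist_class \<mu> \<sigma>.
      prob_space.indep_vars F (\<lambda>_. borel) (\<lambda>j v. v $ j) UNIV \<longrightarrow>
      ratio (OPT F) (REV (bundle_loglottery mu_bar sigma_bar :: 'm mechanism) F)
        \<le> ennreal (rho (sigma_bar / mu_bar))"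
    using OPT_le_sum_means REV_bundle_loglottery_ge[OF mu_pos sigma_nonneg] \<open>0 < mu_bar\<close> rho_pos
    unfolding mu_bar_def sigma_bar_def by (blast intro: ratio_le)
  ultimately show ?thesis by blast
qed

end
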